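(* Let $n,m,k\in\mathbb{N}$, $p\in\mathbb{N}\cup\{0\}$, and let $F:V(T_n)\to V(D_m)$ satisfy $2^{p}d_{T_n}(u,v)\le d_{D_m}(F(u),F(v))\le 2^k\cdot 2^{p}d_{T_n}(u,v)$ for all $u,v\in V(T_n)$. Let $s$ be a vertex of $T_n$, and let $M$ be a subdiamond of $D_m$ such that $F$ maps $s$ and all descendants of $s$ lying in generations $1,2,\dots,2^k+2$ relative to $s$ into $M$. Let $s_1,s_2,s_3,s_4$ be the four grandchildren of $s$, and for $i=1,\dots,4$ let $S_i$ be the set of those descendants of $s_i$ which lie in generations $\ge 2^k+3$ relative to $s$. Then for at most two indices $i\in\{1,2,3,4\}$ the set $S_i$ contains a vertex $x$ with $F(x)\notin M$.
   Context: $T_n$: vertices are finite $0$-$1$ sequences of length at most $n$; two vertices are adjacent if one sequence is obtained from the other by adding one term on the right; metric is the shortest path metric. A descendant of $s$ is a sequence extending $s$; it lies in generation $j$ relative to $s$ if it is $j$ terms longer than $s$ ($s$ itself is generation $0$); grandchildren are the descendants in generation $2$. Diamonds: $D_0$ is an edge; $D_i$ is obtained from $D_{i-1}$ by replacing each edge $uv$ by a quadrilateral $u,a,v,b$; $D_m$ has the shortest path metric with unit edges. A subdiamond of $D_m$ is the set of vertices that evolved from a single edge $e$ of some $D_j$ ($0\le j\le m$), including the endpoints of $e$ (its top and bottom). *)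

theory Defs
  imports Main
begin

definition graph_dist :: "('a \<times> 'a) set \<Rightarrow> 'a \<Rightarrow> 'a \<Rightarrow> nat" where
  "graph_dist E u v = (LEAST k. (u, v) \<in> E ^^ k)"

definition tree_verts :: "nat \<Rightarrow> bool list set" where
  "tree_verts n = {s. length s \<le> n}"

definition tree_adj :: "nat \<Rightarrow> (bool list \<times> bool list) set" where
  "tree_adj n = {(s, t). s \<in> tree_verts n \<and> t \<in> tree_verts n \<and>
                   ((\<exists>b. t = s @ [b]) \<or> (\<exists>b. s = t @ [b]))}"

definition dT :: "nat \<Rightarrow> bool list \<Rightarrow> bool list \<Rightarrow> nat" where
  "dT n = graph_dist (tree_adj n)"

text \<open>Vertices: the bottom and top of D_0, and the new vertex Mid u v c created
  when the edge with bottom u and top v is replaced by the quadrilateral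
  u, Mid u v False, v, Mid u v True.\<close>

datatype dv = Bot | Top | Mid dv dv bool

text \<open>Edges are stored as (bottom, top) pairs.\<close>

definition children :: "dv \<times> dv \<Rightarrow> (dv \<times> dv) set" where
  "children e = (case e of (u, v) \<Rightarrow>
       {(u, Mid u v c) | c. True} \<union> {(Mid u v c, v) | c. True})"

text \<open>Edges of D_{j+i} that evolved from the edge e of D_j.\<close>

fun desc_edges :: "dv \<times> dv \<Rightarrow> nat \<Rightarrow> (dv \<times> dv) set" where
  "desc_edges e 0 = {e}"
| "desc_edges e (Suc i) = (\<Union>e' \<in> desc_edges e i. children e')"

definition diamond_edges :: "nat \<Rightarrow> (dv \<times> dv) set" where
  "diamond_edges m = desc_edges (Bot, Top) m"

definition edge_verts :: "(dv \<times> dv) set \<Rightarrow> dv set" where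
  "edge_verts E = fst ` E \<union> snd ` E"

definition diamond_verts :: "nat \<Rightarrow> dv set" where
  "diamond_verts m = edge_verts (diamond_edges m)"

definition diamond_adj :: "nat \<Rightarrow> (dv \<times> dv) set" where
  "diamond_adj m = diamond_edges m \<union> (diamond_edges m)\<inverse>"

definition dD :: "nat \<Rightarrow> dv \<Rightarrow> dv \<Rightarrow> nat" where
  "dD m = graph_dist (diamond_adj m)"

definition subdiamond :: "nat \<Rightarrow> dv set \<Rightarrow> bool" where
  "subdiamond m M \<longleftrightarrow>
     (\<exists>j\<le>m. \<exists>e \<in> diamond_edges j. M = edge_verts (desc_edges e (m - j)))"

end

theory Submission
  imports Defs "HOL-Library.Sublist"
begin

text \<open>A subdiamond M is attached to the rest of D_m only at its top and bottom, so every
  edge leaving M starts at one of these two vertices. Suppose the set S_i of grandchild i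
  contains a vertex mapped outside M. Descending from s_i towards it, the images stay in M
  for 2^k further generations, so there is a first vertex y_i, in generation at least
  2^k + 3, with F y_i outside M and F (parent y_i) inside M. These two images are at
  distance at most 2^k 2^p, and a geodesic between them exits M through its top or
  bottom w_i; hence w_i is within 2^k 2^p of F y_i. If two indices i \<noteq> j had the same
  w_i = w_j, then F y_i and F y_j would be within 2^(k+1) 2^p, so y_i and y_j within
  2^(k+1) in the tree. But the tree path from y_i to y_j passes through the child of s
  above s_i, so it has length at least 2^(k+1) + 4. Thus i \<mapsto> w_i is injective into
  the two-element set {top, bottom}.\<close>

section \<open>Graph distance\<close>

lemma graph_dist_le: "(u, v) \<in> E ^^ d \<Longrightarrow> graph_dist E u v \<le> d"
  unfolding graph_dist_def by (rule Least_le)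

lemma graph_dist_relpow: "(u, v) \<in> E\<^sup>* \<Longrightarrow> (u, v) \<in> E ^^ graph_dist E u v"
  unfolding graph_dist_def rtrancl_power by (rule LeastI_ex)

lemma graph_dist_triangle:
  assumes "(u, v) \<in> E\<^sup>*" "(v, w) \<in> E\<^sup>*"
  shows "graph_dist E u w \<le> graph_dist E u v + graph_dist E v w"
  using graph_dist_relpow[OF assms(1)] graph_dist_relpow[OF assms(2)]
  by (intro graph_dist_le) (auto simp: relpow_add)

lemma relpow_sym: "E\<inverse> = E \<Longrightarrow> (u, v) \<in> E ^^ d \<Longrightarrow> (v, u) \<in> E ^^ d"
proof (induction d arbitrary: v)
  case (Suc d)
  then obtain w where "(u, w) \<in> E ^^ d" "(w, v) \<in> E" by (auto elim: relpow_Suc_E)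
  with Suc show ?case by (metis converseI relpow_Suc_I2)
qed simp

lemma graph_dist_sym: "E\<inverse> = E \<Longrightarrow> graph_dist E u v = graph_dist E v u"
  unfolding graph_dist_def by (metis relpow_sym)

lemma relpow_exit:
  assumes "(x, y) \<in> E ^^ d" "x \<in> M" "y \<notin> M"
    and exits: "\<And>a b. (a, b) \<in> E \<Longrightarrow> a \<in> M \<Longrightarrow> b \<notin> M \<Longrightarrow> a \<in> W"
  shows "\<exists>w\<in>W. \<exists>d'\<le>d. (w, y) \<in> E ^^ d'"
  using assms(1,3)
proof (induction d arbitrary: y)
  case 0
  with \<open>x \<in> M\<close> show ?case by simp
next
  case (Suc d)
  then obtain z where z: "(x, z) \<in> E ^^ d" "(z, y) \<in> E" by (auto elim: relpow_Suc_E)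
  show ?case
  proof (cases "z \<in> M")
    case True
    with exits z(2) Suc.prems(2) have "z \<in> W" by blast
    with z(2) show ?thesis by (intro bexI[of _ z] exI[of _ 1]) auto
  next
    case False
    then obtain w d' where "w \<in> W" "d' \<le> d" "(w, z) \<in> E ^^ d'" using Suc.IH[OF z(1)] by blast
    with z(2) show ?thesis by (intro bexI[of _ w] exI[of _ "Suc d'"]) auto
  qed
qed

lemma graph_dist_exit:
  assumes "(x, y) \<in> E\<^sup>*" "x \<in> M" "y \<notin> M"
    and "\<And>a b. (a, b) \<in> E \<Longrightarrow> a \<in> M \<Longrightarrow> b \<notin> M \<Longrightarrow> a \<in> W"
  obtains w where "w \<in> W" "graph_dist E w y \<le> graph_dist E x y"
proof -
  obtain w d where "w \<in> W" "d \<le> graph_dist E x y" "(w, y) \<in> E ^^ d"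
    using relpow_exit[OF graph_dist_relpow[OF assms(1)] assms(2,3)] assms(4) by blast
  with that show thesis by (meson graph_dist_le order_trans)
qed

section \<open>The binary tree\<close>

lemma tree_adj_sym: "(tree_adj n)\<inverse> = tree_adj n"
  by (auto simp: tree_adj_def)

lemma dT_snoc_le:
  assumes "u @ [b] \<in> tree_verts n"
  shows "dT n u (u @ [b]) \<le> 1"
proof -
  have "(u, u @ [b]) \<in> tree_adj n" using assms by (auto simp: tree_adj_def tree_verts_def)
  then show ?thesis unfolding dT_def by (intro graph_dist_le) simp
qed

lemma tree_root_rtrancl: "u \<in> tree_verts n \<Longrightarrow> ([], u) \<in> (tree_adj n)\<^sup>*"
proof (induction u rule: rev_induct)
  case (snoc b u)
  then have "u \<in> tree_verts n" "(u, u @ [b]) \<in> tree_adj n"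
    by (auto simp: tree_verts_def tree_adj_def)
  with snoc.IH show ?case by (meson rtrancl.rtrancl_into_rtrancl)
qed simp

lemma tree_connected: "u \<in> tree_verts n \<Longrightarrow> v \<in> tree_verts n \<Longrightarrow> (u, v) \<in> (tree_adj n)\<^sup>*"
  by (metis converseI rtrancl_converse rtrancl_trans tree_adj_sym tree_root_rtrancl)

lemma tree_relpow_length:
  "(u, v) \<in> tree_adj n ^^ d \<Longrightarrow> length u \<le> length v + d \<and> length v \<le> length u + d"
proof (induction d arbitrary: v)
  case (Suc d)
  then obtain z where z: "(u, z) \<in> tree_adj n ^^ d" "(z, v) \<in> tree_adj n"
    by (auto elim: relpow_Suc_E)
  then have "length z = Suc (length v) \<or> length v = Suc (length z)"
    by (auto simp: tree_adj_def)
  with Suc.IH[OF z(1)] show ?case by auto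
qed simp

lemma tree_relpow_leave_subtree:
  assumes "(u, v) \<in> tree_adj n ^^ d" "prefix w u" "\<not> prefix w v"
  shows "\<exists>d1 d2. d1 + d2 = d \<and> (u, butlast w) \<in> tree_adj n ^^ d1 \<and>
                 (butlast w, v) \<in> tree_adj n ^^ d2"
  using assms
proof (induction d arbitrary: u)
  case 0
  then show ?case by auto
next
  case (Suc d)
  then obtain x where x: "(u, x) \<in> tree_adj n" "(x, v) \<in> tree_adj n ^^ d"
    by (metis relpow_Suc_D2)
  show ?case
  proof (cases "prefix w x")
    case True
    then obtain d1 d2 where "d1 + d2 = d" "(x, butlast w) \<in> tree_adj n ^^ d1"
      "(butlast w, v) \<in> tree_adj n ^^ d2"
      using Suc.IH[OF x(2) _ Suc.prems(3)] by blast
    with x(1) show ?thesis by (metis add_Suc relpow_Suc_I2)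
  next
    case False
    with x(1) \<open>prefix w u\<close> obtain b where "u = x @ [b]"
      by (auto simp: tree_adj_def prefix_def)
    with False \<open>prefix w u\<close> have "w = u"
      by (metis prefix_order.antisym_conv2 prefix_snoc)
    with \<open>u = x @ [b]\<close> have "butlast w = x" by simp
    with x show ?thesis by (intro exI[of _ 1] exI[of _ d]) auto
  qed
qed

lemma dT_leave_subtree:
  assumes "u \<in> tree_verts n" "v \<in> tree_verts n" "prefix w u" "\<not> prefix w v"
  shows "length u + length v \<le> 2 * (length w - 1) + dT n u v"
proof -
  have "(u, v) \<in> tree_adj n ^^ dT n u v"
    unfolding dT_def using assms(1,2) by (intro graph_dist_relpow tree_connected)
  then obtain d1 d2 where "d1 + d2 = dT n u v" "(u, butlast w) \<in> tree_adj n ^^ d1"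
    "(butlast w, v) \<in> tree_adj n ^^ d2"
    using tree_relpow_leave_subtree assms(3,4) by blast
  moreover from this have "length u \<le> length (butlast w) + d1" "length v \<le> length (butlast w) + d2"
    using tree_relpow_length by blast+
  ultimately show ?thesis by simp
qed

text \<open>The path between the two vertices passes through a child of s.\<close>

lemma dT_distinct_grandchildren:
  assumes "s @ [a1, b1] @ r1 \<in> tree_verts n" "s @ [a2, b2] @ r2 \<in> tree_verts n"
    and "(a1, b1) \<noteq> (a2, b2)"
  shows "length r1 + length r2 + 2 \<le> dT n (s @ [a1, b1] @ r1) (s @ [a2, b2] @ r2)"
proof -
  have "\<not> prefix (s @ [a1, b1]) (s @ [a2, b2] @ r2)"
    using assms(3) by (auto simp: prefix_def)
  with dT_leave_subtree[OF assms(1,2), of "s @ [a1, b1]"] show ?thesis by simp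
qed

section \<open>Diamond graphs\<close>

fun level :: "dv \<Rightarrow> nat" where
  "level Bot = 0"
| "level Top = 0"
| "level (Mid u v c) = Suc (max (level u) (level v))"

definition edge_level :: "dv \<times> dv \<Rightarrow> nat" where
  "edge_level e = max (level (fst e)) (level (snd e))"

text \<open>The edge that was subdivided to create the newer endpoint of e.\<close>

definition parent_edge :: "dv \<times> dv \<Rightarrow> dv \<times> dv" where
  "parent_edge e = (if level (fst e) < level (snd e)
     then (case snd e of Mid a b c \<Rightarrow> (a, b) | _ \<Rightarrow> e)
     else (case fst e of Mid a b c \<Rightarrow> (a, b) | _ \<Rightarrow> e))"

lemma children_cases:
  assumes "e' \<in> children e"
  obtains c where "e' = (fst e, Mid (fst e) (snd e) c)"
        | c where "e' = (Mid (fst e) (snd e) c, snd e)"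
  using assms by (cases e) (auto simp: children_def)

lemma parent_edge_child: "e' \<in> children e \<Longrightarrow> parent_edge e' = e"
  by (erule children_cases) (auto simp: parent_edge_def)

lemma edge_level_child: "e' \<in> children e \<Longrightarrow> edge_level e' = Suc (edge_level e)"
  by (erule children_cases) (auto simp: edge_level_def)

lemma desc_edges_add: "desc_edges e (i + j) = (\<Union>e'\<in>desc_edges e i. desc_edges e' j)"
  by (induction j) auto

lemma desc_edges_Suc_children: "desc_edges e (Suc i) = (\<Union>e'\<in>children e. desc_edges e' i)"
  using desc_edges_add[of e 1 i] by simp

lemma parent_edge_funpow_desc_edges: "e' \<in> desc_edges e i \<Longrightarrow> (parent_edge ^^ i) e' = e"
proof (induction i arbitrary: e')
  case (Suc i)
  then obtain e1 where "e1 \<in> desc_edges e i" "e' \<in> children e1" by auto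
  then have "(parent_edge ^^ Suc i) e' = (parent_edge ^^ i) e1"
    by (simp only: funpow_Suc_right comp_apply parent_edge_child)
  with Suc.IH \<open>e1 \<in> desc_edges e i\<close> show ?case by simp
qed simp

lemma edge_level_desc_edges: "e' \<in> desc_edges e i \<Longrightarrow> edge_level e' = edge_level e + i"
proof (induction i arbitrary: e')
  case (Suc i)
  then obtain e1 where "e1 \<in> desc_edges e i" "e' \<in> children e1" by auto
  with Suc.IH show ?case by (simp add: edge_level_child)
qed simp

lemma edge_level_diamond_edges: "e \<in> diamond_edges j \<Longrightarrow> edge_level e = j"
  using edge_level_desc_edges[of e "(Bot, Top)" j]
  by (simp add: diamond_edges_def edge_level_def)

lemma children_pair: "children (a, b) = range (\<lambda>c. (a, Mid a b c)) \<union> range (\<lambda>c. (Mid a b c, b))"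
  by (auto simp: children_def)

lemma edge_verts_children:
  "edge_verts (children e) = {fst e, snd e} \<union> range (Mid (fst e) (snd e))"
  by (cases e) (auto simp: edge_verts_def children_pair image_Un image_image)

lemma edge_verts_UN: "edge_verts (\<Union>x\<in>X. f x) = (\<Union>x\<in>X. edge_verts (f x))"
  by (auto simp: edge_verts_def)

lemma edge_verts_desc_edges_Suc:
  "edge_verts (desc_edges e (Suc i)) =
     edge_verts (desc_edges e i) \<union> {Mid a b c | a b c. (a, b) \<in> desc_edges e i}"
  by (auto simp: edge_verts_UN edge_verts_children) (auto simp: edge_verts_def image_iff)

lemma edge_verts_desc_edges_cases:
  assumes "x \<in> edge_verts (desc_edges e i)"
  shows "x = fst e \<or> x = snd e \<or>
    (\<exists>a b c i'. x = Mid a b c \<and> i' < i \<and> (a, b) \<in> desc_edges e i')"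
  using assms
proof (induction i)
  case 0
  then show ?case by (auto simp: edge_verts_def)
next
  case (Suc i)
  then show ?case unfolding edge_verts_desc_edges_Suc by (blast intro: less_SucI)
qed

lemma endpoints_in_edge_verts_desc_edges: "{fst e, snd e} \<subseteq> edge_verts (desc_edges e i)"
proof (induction i)
  case 0
  then show ?case by (simp add: edge_verts_def)
next
  case (Suc i)
  then show ?case by (simp only: edge_verts_desc_edges_Suc) blast
qed

text \<open>A vertex of the subdiamond over an edge e of D_j, other than the endpoints of e,
  belongs to no other subdiamond over an edge of D_j: it was created after generation j,
  and following parent edges back to generation j recovers e.\<close>

lemma subdiamond_interior_unique:
  assumes e: "e \<in> diamond_edges j" and e': "e' \<in> diamond_edges j"
    and x: "x \<in> edge_verts (desc_edges e i)" "x \<in> edge_verts (desc_edges e' i)"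
    and interior: "x \<noteq> fst e" "x \<noteq> snd e"
  shows "e = e'"
proof -
  obtain a b c i1 where x1: "x = Mid a b c" "(a, b) \<in> desc_edges e i1"
    using edge_verts_desc_edges_cases[OF x(1)] interior by auto
  have level_x: "level x = j + i1 + 1"
    using x1 edge_level_desc_edges[OF x1(2)] edge_level_diamond_edges[OF e]
    by (simp add: edge_level_def)
  have "level (fst e') \<le> j" "level (snd e') \<le> j"
    using edge_level_diamond_edges[OF e'] by (auto simp: edge_level_def)
  with level_x have "x \<noteq> fst e'" "x \<noteq> snd e'" by auto
  then obtain a' b' c' i2 where x2: "x = Mid a' b' c'" "(a', b') \<in> desc_edges e' i2"
    using edge_verts_desc_edges_cases[OF x(2)] by auto
  have "level x = j + i2 + 1"
    using x2 edge_level_desc_edges[OF x2(2)] edge_level_diamond_edges[OF e']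
    by (simp add: edge_level_def)
  with level_x x1 x2 show ?thesis
    using parent_edge_funpow_desc_edges[OF x1(2)] parent_edge_funpow_desc_edges[OF x2(2)]
    by simp
qed

lemma diamond_edges_split:
  "j \<le> m \<Longrightarrow> diamond_edges m = (\<Union>e\<in>diamond_edges j. desc_edges e (m - j))"
  using desc_edges_add[of "(Bot, Top)" j "m - j"] by (simp add: diamond_edges_def)

lemma subdiamond_boundary:
  assumes "subdiamond m M"
  obtains b t where "b \<in> M" "t \<in> M"
    "\<And>x y. (x, y) \<in> diamond_adj m \<Longrightarrow> x \<in> M \<Longrightarrow> y \<notin> M \<Longrightarrow> x \<in> {b, t}"
proof -
  obtain j e where j: "j \<le> m" "e \<in> diamond_edges j" "M = edge_verts (desc_edges e (m - j))"
    using assms by (auto simp: subdiamond_def)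
  note edges = diamond_edges_split[OF j(1)]
  show ?thesis
  proof
    show "fst e \<in> M" "snd e \<in> M" using j(3) endpoints_in_edge_verts_desc_edges by auto
    fix x y assume xy: "(x, y) \<in> diamond_adj m" "x \<in> M" "y \<notin> M"
    show "x \<in> {fst e, snd e}"
    proof (rule ccontr)
      assume interior: "x \<notin> {fst e, snd e}"
      from xy(1) obtain e' where e': "e' \<in> diamond_edges j"
        "(x, y) \<in> desc_edges e' (m - j) \<or> (y, x) \<in> desc_edges e' (m - j)"
        unfolding diamond_adj_def edges by auto
      then have "x \<in> edge_verts (desc_edges e' (m - j))" "y \<in> edge_verts (desc_edges e' (m - j))"
        by (force simp: edge_verts_def)+
      with subdiamond_interior_unique[OF j(2) e'(1)] xy(2) interior j(3) have "y \<in> M"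
        by auto
      with xy(3) show False by simp
    qed
  qed
qed

lemma subdiamond_subset_diamond_verts:
  assumes "subdiamond m M"
  shows "M \<subseteq> diamond_verts m"
proof -
  obtain j e where j: "j \<le> m" "e \<in> diamond_edges j" "M = edge_verts (desc_edges e (m - j))"
    using assms by (auto simp: subdiamond_def)
  have "desc_edges e (m - j) \<subseteq> diamond_edges m"
    using diamond_edges_split[OF j(1)] j(2) by auto
  with j(3) show ?thesis by (auto simp: diamond_verts_def edge_verts_def)
qed

lemma desc_edges_connected:
  "x \<in> edge_verts (desc_edges e i) \<Longrightarrow>
     (fst e, x) \<in> (desc_edges e i \<union> (desc_edges e i)\<inverse>)\<^sup>*"
proof (induction i arbitrary: e x)
  case 0
  then show ?case by (cases e) (auto simp: edge_verts_def)
next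
  case (Suc i)
  obtain u v where e: "e = (u, v)" by (cases e)
  let ?R = "\<lambda>E. (E \<union> E\<inverse>)\<^sup>*"
  have mono: "?R (desc_edges e' i) \<subseteq> ?R (desc_edges e (Suc i))" if "e' \<in> children e" for e'
  proof -
    have "desc_edges e' i \<subseteq> desc_edges e (Suc i)"
      using that by (subst desc_edges_Suc_children) blast
    then show ?thesis by (intro rtrancl_mono) blast
  qed
  from Suc.prems obtain e' where e': "e' \<in> children e" "x \<in> edge_verts (desc_edges e' i)"
    unfolding edge_verts_def desc_edges_Suc_children by blast
  from e'(1) show ?case
  proof (cases rule: children_cases)
    case (1 c)
    with Suc.IH[OF e'(2)] mono[OF e'(1)] e show ?thesis by auto
  next
    case (2 c)
    let ?e1 = "(u, Mid u v c)"
    have "?e1 \<in> children e" using e by (auto simp: children_def)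
    then have "(u, Mid u v c) \<in> ?R (desc_edges e (Suc i))"
      using Suc.IH[of "Mid u v c" ?e1] endpoints_in_edge_verts_desc_edges[of ?e1 i] mono
      by auto
    moreover have "(Mid u v c, x) \<in> ?R (desc_edges e (Suc i))"
      using Suc.IH[OF e'(2)] mono[OF e'(1)] 2 e by auto
    ultimately show ?thesis using e by auto
  qed
qed

lemma diamond_adj_sym: "(diamond_adj m)\<inverse> = diamond_adj m"
  by (auto simp: diamond_adj_def)

lemma diamond_connected:
  assumes "x \<in> diamond_verts m" "y \<in> diamond_verts m"
  shows "(x, y) \<in> (diamond_adj m)\<^sup>*"
proof -
  have "(Bot, x) \<in> (diamond_adj m)\<^sup>*" "(Bot, y) \<in> (diamond_adj m)\<^sup>*"
    using desc_edges_connected[of _ "(Bot, Top)" m] assms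
    by (auto simp: diamond_verts_def diamond_edges_def diamond_adj_def)
  then show ?thesis
    by (metis converseI diamond_adj_sym rtrancl_converse rtrancl_trans)
qed

section \<open>Lipschitz maps from trees to diamonds\<close>

lemma exit_near_boundary:
  assumes F_into: "\<forall>u \<in> tree_verts n. F u \<in> diamond_verts m"
    and lip: "\<forall>u \<in> tree_verts n. \<forall>v \<in> tree_verts n. dD m (F u) (F v) \<le> K * dT n u v"
    and exits: "\<And>x y. (x, y) \<in> diamond_adj m \<Longrightarrow> x \<in> M \<Longrightarrow> y \<notin> M \<Longrightarrow> x \<in> W"
    and vert: "t @ r \<in> tree_verts n" and out: "F (t @ r) \<notin> M"
    and stay: "\<And>r'. length r' \<le> L \<Longrightarrow> t @ r' \<in> tree_verts n \<Longrightarrow> F (t @ r') \<in> M"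
  obtains r' w where "t @ r' \<in> tree_verts n" "L < length r'" "w \<in> W" "dD m w (F (t @ r')) \<le> K"
proof -
  have verts: "t @ take l r \<in> tree_verts n" for l
    using vert by (auto simp: tree_verts_def)
  obtain l where l: "l < length r" "\<forall>i\<le>l. F (t @ take i r) \<in> M"
    "F (t @ take (Suc l) r) \<notin> M"
    using ex_least_nat_less[of "\<lambda>l. F (t @ take l r) \<notin> M" "length r"] out stay[of "[]"] vert
    by (auto simp: tree_verts_def)
  have "L \<le> l" using stay[of "take (Suc l) r"] l(3) verts by (metis length_take min_le_iff_disj not_less_eq_eq)
  define z where "z = t @ take l r"
  define y where "y = t @ take (Suc l) r"
  have y_snoc: "y = z @ [r ! l]" unfolding y_def z_def using l(1)
    by (simp add: take_Suc_conv_app_nth)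
  have "dD m (F z) (F y) \<le> K"
  proof -
    have "dD m (F z) (F y) \<le> K * dT n z y" using lip verts unfolding y_def z_def by blast
    also have "\<dots> \<le> K" using dT_snoc_le[of z "r ! l" n] verts y_snoc
      unfolding y_def by (metis mult.right_neutral mult_le_mono2)
    finally show ?thesis .
  qed
  moreover obtain w where w: "w \<in> W" "dD m w (F y) \<le> dD m (F z) (F y)"
  proof -
    have "(F z, F y) \<in> (diamond_adj m)\<^sup>*"
      using F_into verts unfolding z_def y_def by (intro diamond_connected) auto
    moreover have "F z \<in> M" "F y \<notin> M" using l unfolding z_def y_def by auto
    ultimately show thesis
      using graph_dist_exit[of "F z" "F y" "diamond_adj m" M W] exits that
      unfolding dD_def by blast
  qed
  ultimately have "dD m w (F y) \<le> K" by linarith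
  with w that[of "take (Suc l) r" w] show ?thesis
    using \<open>L \<le> l\<close> l(1) verts unfolding y_def by simp
qed

lemma grandchild_exit_near_boundary:
  assumes F_into: "\<forall>u \<in> tree_verts n. F u \<in> diamond_verts m"
    and lip: "\<forall>u \<in> tree_verts n. \<forall>v \<in> tree_verts n. dD m (F u) (F v) \<le> K * dT n u v"
    and exits: "\<And>x y. (x, y) \<in> diamond_adj m \<Longrightarrow> x \<in> M \<Longrightarrow> y \<notin> M \<Longrightarrow> x \<in> W"
    and gens: "\<forall>r. 1 \<le> length r \<and> length r \<le> L + 2 \<and> s @ r \<in> tree_verts n \<longrightarrow> F (s @ r) \<in> M"
    and "s @ [a, b] @ r \<in> tree_verts n" "F (s @ [a, b] @ r) \<notin> M"
  obtains r' w where "s @ [a, b] @ r' \<in> tree_verts n" "L < length r'" "w \<in> W"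
    "dD m w (F (s @ [a, b] @ r')) \<le> K"
proof -
  have stay: "F ((s @ [a, b]) @ r') \<in> M"
    if "length r' \<le> L" "(s @ [a, b]) @ r' \<in> tree_verts n" for r'
    using gens[rule_format, of "[a, b] @ r'"] that by simp
  from assms(5,6) have "(s @ [a, b]) @ r \<in> tree_verts n" "F ((s @ [a, b]) @ r) \<notin> M"
    by simp_all
  from exit_near_boundary[where M = M and W = W, OF F_into lip _ this stay] exits that
  show thesis by auto
qed

text \<open>The two images are within 2 c L of each other through w, while the tree path between
  the two vertices has length more than 2 L + 2.\<close>

lemma shared_boundary_vertex_same_grandchild:
  assumes F_into: "\<forall>u \<in> tree_verts n. F u \<in> diamond_verts m"
    and lower: "\<forall>u \<in> tree_verts n. \<forall>v \<in> tree_verts n. c * dT n u v \<le> dD m (F u) (F v)"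
    and y1: "s @ [a1, b1] @ r1 \<in> tree_verts n" "L < length r1"
      "dD m w (F (s @ [a1, b1] @ r1)) \<le> c * L"
    and y2: "s @ [a2, b2] @ r2 \<in> tree_verts n" "L < length r2"
      "dD m w (F (s @ [a2, b2] @ r2)) \<le> c * L"
    and "c > 0" "w \<in> diamond_verts m"
  shows "(a1, b1) = (a2, b2)"
proof (rule ccontr)
  assume distinct: "(a1, b1) \<noteq> (a2, b2)"
  define y1 where "y1 = s @ [a1, b1] @ r1"
  define y2 where "y2 = s @ [a2, b2] @ r2"
  have "c * dT n y1 y2 \<le> dD m (F y1) (F y2)"
    using lower y1 y2 unfolding y1_def y2_def by blast
  also have "\<dots> \<le> dD m (F y1) w + dD m w (F y2)"
    unfolding dD_def using y1 y2 F_into \<open>w \<in> diamond_verts m\<close> unfolding y1_def y2_def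
    by (intro graph_dist_triangle diamond_connected) auto
  also have "\<dots> = dD m w (F y1) + dD m w (F y2)"
    unfolding dD_def by (simp add: graph_dist_sym[OF diamond_adj_sym])
  also have "\<dots> \<le> c * (2 * L)"
    using y1 y2 unfolding y1_def y2_def by simp
  finally have "dT n y1 y2 \<le> 2 * L"
    using \<open>c > 0\<close> by simp
  moreover have "length r1 + length r2 + 2 \<le> dT n y1 y2"
    using y1(1) y2(1) distinct unfolding y1_def y2_def by (rule dT_distinct_grandchildren)
  ultimately show False
    using y1(2) y2(2) by linarith
qed

theorem lemmaL:
  fixes n m k p :: nat
    and F :: "bool list \<Rightarrow> dv"
    and s :: "bool list"
    and M :: "dv set"
  assumes "n \<ge> 1" and "m \<ge> 1" and "k \<ge> 1"
    and F_into: "\<forall>u \<in> tree_verts n. F u \<in> diamond_verts m"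
    and bilip: "\<forall>u \<in> tree_verts n. \<forall>v \<in> tree_verts n.
        2 ^ p * dT n u v \<le> dD m (F u) (F v) \<and>
        dD m (F u) (F v) \<le> 2 ^ k * 2 ^ p * dT n u v"
    and s_vert: "s \<in> tree_verts n"
    and M_sub: "subdiamond m M"
    and s_in: "F s \<in> M"
    and gens_in: "\<forall>r. 1 \<le> length r \<and> length r \<le> 2 ^ k + 2 \<and> s @ r \<in> tree_verts n
                      \<longrightarrow> F (s @ r) \<in> M"
  shows "card {(a::bool, b::bool).
           (\<exists>x \<in> {s @ [a, b] @ r | r. s @ [a, b] @ r \<in> tree_verts n \<and>
                                     2 + length r \<ge> 2 ^ k + 3}.
             F x \<notin> M)} \<le> 2"
proof -
  define A where "A = {(a::bool, b::bool).
           (\<exists>x \<in> {s @ [a, b] @ r | r. s @ [a, b] @ r \<in> tree_verts n \<and>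
                                     2 + length r \<ge> 2 ^ k + 3}.
             F x \<notin> M)}"
  obtain bot top where "bot \<in> M" "top \<in> M" and
    exits: "\<And>x y. (x, y) \<in> diamond_adj m \<Longrightarrow> x \<in> M \<Longrightarrow> y \<notin> M \<Longrightarrow> x \<in> {bot, top}"
    using subdiamond_boundary[OF M_sub] by blast
  then have boundary_verts: "{bot, top} \<subseteq> diamond_verts m"
    using subdiamond_subset_diamond_verts[OF M_sub] by auto
  have lip: "\<forall>u \<in> tree_verts n. \<forall>v \<in> tree_verts n. dD m (F u) (F v) \<le> 2 ^ p * 2 ^ k * dT n u v"
    and lower: "\<forall>u \<in> tree_verts n. \<forall>v \<in> tree_verts n. 2 ^ p * dT n u v \<le> dD m (F u) (F v)"
    using bilip by (simp_all add: mult.commute)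
  define close where "close q w \<longleftrightarrow> (\<exists>r. s @ [fst q, snd q] @ r \<in> tree_verts n \<and>
      2 ^ k < length r \<and> dD m w (F (s @ [fst q, snd q] @ r)) \<le> 2 ^ p * 2 ^ k)" for q w
  have "card A \<le> card {bot, top}"
  proof (rule card_le_if_inj_on_rel[where r = close])
    show "\<exists>w. w \<in> {bot, top} \<and> close q w" if "q \<in> A" for q
    proof -
      from that obtain r where "s @ [fst q, snd q] @ r \<in> tree_verts n"
        "F (s @ [fst q, snd q] @ r) \<notin> M"
        unfolding A_def by auto
      then obtain r' w where "s @ [fst q, snd q] @ r' \<in> tree_verts n" "2 ^ k < length r'"
        "w \<in> {bot, top}" "dD m w (F (s @ [fst q, snd q] @ r')) \<le> 2 ^ p * 2 ^ k"
        using grandchild_exit_near_boundary[where M = M and W = "{bot, top}", OF F_into lip _ gens_in]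
          exits by blast
      then show ?thesis unfolding close_def by auto
    qed
    show "q1 = q2" if "q1 \<in> A" "q2 \<in> A" "w \<in> {bot, top}" "close q1 w" "close q2 w" for q1 q2 w
    proof -
      from that obtain r1 r2 where "s @ [fst q1, snd q1] @ r1 \<in> tree_verts n" "2 ^ k < length r1"
        "dD m w (F (s @ [fst q1, snd q1] @ r1)) \<le> 2 ^ p * 2 ^ k"
        "s @ [fst q2, snd q2] @ r2 \<in> tree_verts n" "2 ^ k < length r2"
        "dD m w (F (s @ [fst q2, snd q2] @ r2)) \<le> 2 ^ p * 2 ^ k"
        unfolding close_def by blast
      then have "(fst q1, snd q1) = (fst q2, snd q2)"
        by (rule shared_boundary_vertex_same_grandchild[OF F_into lower, where w = w and L = "2 ^ k"])
          (use \<open>w \<in> {bot, top}\<close> boundary_verts in auto)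
      then show ?thesis by (simp add: prod_eq_iff)
    qed
  qed simp
  also have "\<dots> \<le> 2" by (simp add: card_insert_if)
  finally show ?thesis unfolding A_def .
qed

end
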